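(* Let $a=\sum_{t=0}^7a_te_t$ and $b=\sum_{t=0}^7b_te_t$ be nonzero elements of $C\ell_{1,2}$ with $P(a)=P(b)=0$, and let $d\in C\ell_{1,2}$. Then the equation $axb=d$ (in the unknown $x\in C\ell_{1,2}$) is solvable if and only if $$\frac{aa'db'b}{16(a_0^2+a_2^2+a_4^2+a_6^2)(b_0^2+b_2^2+b_4^2+b_6^2)}=d,$$ in which case all the solutions are given by $$x=\frac{a'db'}{16(a_0^2+a_2^2+a_4^2+a_6^2)(b_0^2+b_2^2+b_4^2+b_6^2)}+y-\frac{a'aybb'}{16(a_0^2+a_2^2+a_4^2+a_6^2)(b_0^2+b_2^2+b_4^2+b_6^2)},\qquad y\in C\ell_{1,2}\text{ arbitrary}.$$
   Context: $C\ell_{1,2}$ is the real Clifford algebra generated by $i_1,i_2,i_3$ with $i_1^2=1$, $i_2^2=i_3^2=-1$ and $i_ti_m=-i_mi_t$ for $t\neq m$, with real basis $e_0=1$, $e_1=i_1$, $e_2=i_2$, $e_3=i_1i_2$, $e_4=i_3$, $e_5=i_1i_3$, $e_6=i_2i_3$, $e_7=i_1i_2i_3$. For $a=\sum_{t=0}^7 a_te_t$ ($a_t\in\mathbb{R}$) define: the prime $a'=a_0+a_1e_1-a_2e_2+a_3e_3-a_4e_4+a_5e_5-a_6e_6-a_7e_7$; $N(a)=a_0^2-a_1^2+a_2^2-a_3^2+a_4^2-a_5^2+a_6^2-a_7^2$; $T(a)=a_0a_7+a_2a_5-a_1a_6-a_3a_4$; $P(a)=N(a)^2+4T(a)^2$.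 *)

theory Defs
  imports Complex_Main
begin

text \<open>The real Clifford algebra Cl(1,2), represented by coordinates with respect to the
basis e0 = 1, e1 = i1, e2 = i2, e3 = i1 i2, e4 = i3, e5 = i1 i3, e6 = i2 i3, e7 = i1 i2 i3,
where i1^2 = 1, i2^2 = i3^2 = -1 and the generators anticommute.\<close>

datatype cl12 = Cl (c0: real) (c1: real) (c2: real) (c3: real)
                   (c4: real) (c5: real) (c6: real) (c7: real)

definition cl_zero :: cl12 where
  "cl_zero = Cl 0 0 0 0 0 0 0 0"

definition cl_add :: "cl12 \<Rightarrow> cl12 \<Rightarrow> cl12" where
  "cl_add a b = Cl (c0 a + c0 b) (c1 a + c1 b) (c2 a + c2 b) (c3 a + c3 b)
                   (c4 a + c4 b) (c5 a + c5 b) (c6 a + c6 b) (c7 a + c7 b)"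

definition cl_sub :: "cl12 \<Rightarrow> cl12 \<Rightarrow> cl12" where
  "cl_sub a b = Cl (c0 a - c0 b) (c1 a - c1 b) (c2 a - c2 b) (c3 a - c3 b)
                   (c4 a - c4 b) (c5 a - c5 b) (c6 a - c6 b) (c7 a - c7 b)"

definition cl_scale :: "real \<Rightarrow> cl12 \<Rightarrow> cl12" where
  "cl_scale r a = Cl (r * c0 a) (r * c1 a) (r * c2 a) (r * c3 a)
                     (r * c4 a) (r * c5 a) (r * c6 a) (r * c7 a)"

definition cl_mult :: "cl12 \<Rightarrow> cl12 \<Rightarrow> cl12" where
  "cl_mult a b = Cl
    ( c0 a * c0 b + c1 a * c1 b - c2 a * c2 b + c3 a * c3 b - c4 a * c4 b + c5 a * c5 b - c6 a * c6 b - c7 a * c7 b)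
    ( c0 a * c1 b + c1 a * c0 b + c2 a * c3 b - c3 a * c2 b + c4 a * c5 b - c5 a * c4 b - c6 a * c7 b - c7 a * c6 b)
    ( c0 a * c2 b + c1 a * c3 b + c2 a * c0 b - c3 a * c1 b + c4 a * c6 b - c5 a * c7 b - c6 a * c4 b - c7 a * c5 b)
    ( c0 a * c3 b + c1 a * c2 b - c2 a * c1 b + c3 a * c0 b - c4 a * c7 b + c5 a * c6 b - c6 a * c5 b - c7 a * c4 b)
    ( c0 a * c4 b + c1 a * c5 b - c2 a * c6 b + c3 a * c7 b + c4 a * c0 b - c5 a * c1 b + c6 a * c2 b + c7 a * c3 b)
    ( c0 a * c5 b + c1 a * c4 b + c2 a * c7 b - c3 a * c6 b - c4 a * c1 b + c5 a * c0 b + c6 a * c3 b + c7 a * c2 b)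
    ( c0 a * c6 b + c1 a * c7 b + c2 a * c4 b - c3 a * c5 b - c4 a * c2 b + c5 a * c3 b + c6 a * c0 b + c7 a * c1 b)
    ( c0 a * c7 b + c1 a * c6 b - c2 a * c5 b + c3 a * c4 b + c4 a * c3 b - c5 a * c2 b + c6 a * c1 b + c7 a * c0 b)"

definition cl_prime :: "cl12 \<Rightarrow> cl12" where
  "cl_prime a = Cl (c0 a) (c1 a) (- c2 a) (c3 a) (- c4 a) (c5 a) (- c6 a) (- c7 a)"

definition cl_N :: "cl12 \<Rightarrow> real" where
  "cl_N a = (c0 a)^2 - (c1 a)^2 + (c2 a)^2 - (c3 a)^2 + (c4 a)^2 - (c5 a)^2 + (c6 a)^2 - (c7 a)^2"

definition cl_T :: "cl12 \<Rightarrow> real" where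
  "cl_T a = c0 a * c7 a + c2 a * c5 a - c1 a * c6 a - c3 a * c4 a"

definition cl_P :: "cl12 \<Rightarrow> real" where
  "cl_P a = (cl_N a)^2 + 4 * (cl_T a)^2"

definition cl_Q :: "cl12 \<Rightarrow> real" where
  "cl_Q a = (c0 a)^2 + (c2 a)^2 + (c4 a)^2 + (c6 a)^2"

end

theory Submission
  imports Defs
begin

text \<open>In any ring, if a g a = a and b h b = b then a x b = d is solvable iff a g d h b = d, and
its solutions are then g d h + y - g a y b h. Making Cl(1,2) a real algebra, P(a) = 0 means
N(a) = T(a) = 0, which turns the identity for a a' a into a a' a = 4 Q(a) a; for a \<noteq> 0 also
Q(a) \<noteq> 0, so g = a' / (4 Q(a)) is a generalized inverse of a.\<close>

lemma regular_two_sided_solvable_iff: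
  fixes a b d g h :: "'a::ring"
  assumes "a * g * a = a" and "b * h * b = b"
  shows "(\<exists>x. a * x * b = d) \<longleftrightarrow> a * g * d * h * b = d"
proof
  assume "\<exists>x. a * x * b = d"
  then obtain x where "a * x * b = d" by blast
  then show "a * g * d * h * b = d"
    by (metis assms mult.assoc)
next
  assume "a * g * d * h * b = d"
  then have "a * (g * d * h) * b = d" by (simp add: mult.assoc)
  then show "\<exists>x. a * x * b = d" ..
qed

lemma regular_two_sided_solutions:
  fixes a b d g h :: "'a::ring"
  assumes "a * g * a = a" and "b * h * b = b" and "a * g * d * h * b = d"
  shows "{x. a * x * b = d} = {g * d * h + y - g * a * y * b * h | y. True}"
proof (intro set_eqI iffI)
  fix x assume "x \<in> {x. a * x * b = d}"
  then have "g * d * h = g * a * x * b * h" by (auto simp: mult.assoc)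
  then have "x = g * d * h + x - g * a * x * b * h" by simp
  then show "x \<in> {g * d * h + y - g * a * y * b * h | y. True}" by blast
next
  fix x assume "x \<in> {g * d * h + y - g * a * y * b * h | y. True}"
  then obtain y where x: "x = g * d * h + y - g * a * y * b * h" by blast
  have "a * (g * a * y * b * h) * b = a * y * b"
    by (metis assms(1,2) mult.assoc)
  then have "a * x * b = a * g * d * h * b"
    by (simp add: x algebra_simps)
  with assms(3) show "x \<in> {x. a * x * b = d}" by simp
qed

instantiation cl12 :: real_algebra_1
begin

definition zero_cl12 :: cl12 where "0 = cl_zero"
definition one_cl12 :: cl12 where "1 = Cl 1 0 0 0 0 0 0 0"
definition plus_cl12 :: "cl12 \<Rightarrow> cl12 \<Rightarrow> cl12" where "(+) = cl_add"
definition minus_cl12 :: "cl12 \<Rightarrow> cl12 \<Rightarrow> cl12" where "(-) = cl_sub"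
definition uminus_cl12 :: "cl12 \<Rightarrow> cl12" where "uminus = cl_scale (-1)"
definition times_cl12 :: "cl12 \<Rightarrow> cl12 \<Rightarrow> cl12" where "(*) = cl_mult"
definition scaleR_cl12 :: "real \<Rightarrow> cl12 \<Rightarrow> cl12" where "scaleR = cl_scale"

instance
  by standard (simp_all add: cl12.expand zero_cl12_def one_cl12_def plus_cl12_def minus_cl12_def
      uminus_cl12_def times_cl12_def scaleR_cl12_def cl_zero_def cl_add_def cl_sub_def cl_scale_def
      cl_mult_def algebra_simps)

end

lemma cl_mult_prime_mult:
  "a * cl_prime a * a =
    Cl (4 * cl_Q a * c0 a - 3 * cl_N a * c0 a - 2 * cl_T a * c7 a)
       (4 * cl_Q a * c1 a - cl_N a * c1 a + 2 * cl_T a * c6 a)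
       (4 * cl_Q a * c2 a - 3 * cl_N a * c2 a - 2 * cl_T a * c5 a)
       (4 * cl_Q a * c3 a - cl_N a * c3 a + 2 * cl_T a * c4 a)
       (4 * cl_Q a * c4 a - 3 * cl_N a * c4 a + 2 * cl_T a * c3 a)
       (4 * cl_Q a * c5 a - cl_N a * c5 a - 2 * cl_T a * c2 a)
       (4 * cl_Q a * c6 a - 3 * cl_N a * c6 a + 2 * cl_T a * c1 a)
       (4 * cl_Q a * c7 a - cl_N a * c7 a - 2 * cl_T a * c0 a)"
  by (simp add: times_cl12_def cl_mult_def cl_prime_def cl_Q_def cl_N_def cl_T_def
      algebra_simps power2_eq_square)

lemma cl_P_eq_0_iff: "cl_P a = 0 \<longleftrightarrow> cl_N a = 0 \<and> cl_T a = 0"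
proof -
  have "cl_P a = 0 \<longleftrightarrow> (cl_N a)\<^sup>2 + (2 * cl_T a)\<^sup>2 = 0"
    by (simp add: cl_P_def power_mult_distrib)
  also have "\<dots> \<longleftrightarrow> cl_N a = 0 \<and> 2 * cl_T a = 0"
    by (rule sum_power2_eq_zero_iff)
  finally show ?thesis by simp
qed

lemma cl_mult_prime_mult_if_P_eq_0:
  assumes "cl_P a = 0"
  shows "a * cl_prime a * a = (4 * cl_Q a) *\<^sub>R a"
  using assms by (simp add: cl_P_eq_0_iff cl_mult_prime_mult cl12.expand scaleR_cl12_def cl_scale_def)

lemma cl_Q_neq_0_if_P_eq_0:
  assumes "a \<noteq> 0" and "cl_P a = 0"
  shows "cl_Q a \<noteq> 0"
proof
  assume "cl_Q a = 0"
  moreover have "cl_N a = 0" using assms(2) by (simp add: cl_P_eq_0_iff)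
  ultimately have "(c0 a)\<^sup>2 + (c2 a)\<^sup>2 + (c4 a)\<^sup>2 + (c6 a)\<^sup>2 = 0"
    and "(c1 a)\<^sup>2 + (c3 a)\<^sup>2 + (c5 a)\<^sup>2 + (c7 a)\<^sup>2 = 0"
    by (simp_all add: cl_Q_def cl_N_def)
  then have "a = 0"
    by (simp add: add_nonneg_eq_0_iff cl12.expand zero_cl12_def cl_zero_def)
  with assms(1) show False ..
qed

lemma cl_generalized_inverse:
  assumes "a \<noteq> 0" and "cl_P a = 0"
  shows "a * ((1 / (4 * cl_Q a)) *\<^sub>R cl_prime a) * a = a"
  using cl_Q_neq_0_if_P_eq_0[OF assms] cl_mult_prime_mult_if_P_eq_0[OF assms(2)] by simp

theorem theorem4p1:
  fixes a b d :: cl12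
  assumes "a \<noteq> cl_zero" and "b \<noteq> cl_zero"
    and "cl_P a = 0" and "cl_P b = 0"
  shows "((\<exists>x. cl_mult (cl_mult a x) b = d) \<longleftrightarrow>
           cl_scale (1 / (16 * cl_Q a * cl_Q b))
             (cl_mult (cl_mult (cl_mult (cl_mult a (cl_prime a)) d) (cl_prime b)) b) = d)
       \<and> ((\<exists>x. cl_mult (cl_mult a x) b = d) \<longrightarrow>
           {x. cl_mult (cl_mult a x) b = d} =
           {cl_sub (cl_add (cl_scale (1 / (16 * cl_Q a * cl_Q b))
                              (cl_mult (cl_mult (cl_prime a) d) (cl_prime b))) y)
                   (cl_scale (1 / (16 * cl_Q a * cl_Q b))
                      (cl_mult (cl_mult (cl_mult (cl_mult (cl_prime a) a) y) b) (cl_prime b)))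
            | y. True})"
proof -
  define k where "k = 1 / (16 * cl_Q a * cl_Q b)"
  define g where "g = (1 / (4 * cl_Q a)) *\<^sub>R cl_prime a"
  define h where "h = (1 / (4 * cl_Q b)) *\<^sub>R cl_prime b"
  have "a \<noteq> 0" and "b \<noteq> 0" using assms(1,2) by (simp_all add: zero_cl12_def)
  then have ga: "a * g * a = a" and hb: "b * h * b = b"
    unfolding g_def h_def using assms(3,4) by (blast intro: cl_generalized_inverse)+
  have ghz: "g * z * h = k *\<^sub>R (cl_prime a * z * cl_prime b)" for z
    by (simp add: g_def h_def k_def mult.commute)
  have "a * g * d * h * b = k *\<^sub>R (a * cl_prime a * d * cl_prime b * b)"
    and "g * a * y * b * h = k *\<^sub>R (cl_prime a * a * y * b * cl_prime b)" for y
    using ghz[of d] ghz[of "a * y * b"] by (simp_all add: mult.assoc)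
  then show ?thesis
    using regular_two_sided_solvable_iff[OF ga hb, of d] regular_two_sided_solutions[OF ga hb, of d]
    by (simp add: ghz k_def flip: times_cl12_def scaleR_cl12_def plus_cl12_def minus_cl12_def)
qed

end
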